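(* Let $n\ge2$ be an integer and let $A_1,\dots,A_{2n}$ be (not necessarily distinct) points in $\mathbb{R}^m$; set $A_{2n+1}=A_1$. Let $G_1$ be the centroid of $A_1,A_3,\dots,A_{2n-1}$ and $G_2$ the centroid of $A_2,A_4,\dots,A_{2n}$. Then $$\sum_{i=1}^{2n}|A_iA_{i+1}|^2=\sum_{\substack{1\le i<j\le 2n\\ 1<j-i<2n-1}}(-1)^{j-i}|A_iA_j|^2$$ holds if and only if $G_1=G_2$.
   Context: $|XY|$ denotes the Euclidean distance in $\mathbb{R}^m$; the centroid of points $B_1,\dots,B_r$ is the point with position vector $\frac1r\sum_k B_k$. *)

theory Defs
  imports "HOL-Analysis.Analysis"
begin

end

theory Submission
  imports Defs
begin

text \<open>For weights \<open>w\<close> summing to zero, expanding \<open>|A\<^sub>i - A\<^sub>j|\<^sup>2\<close> gives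
  \<open>\<Sum>\<^sub>i\<^sub><\<^sub>j w\<^sub>i w\<^sub>j |A\<^sub>iA\<^sub>j|\<^sup>2 = -|\<Sum>\<^sub>i w\<^sub>i A\<^sub>i|\<^sup>2\<close>. Take \<open>w\<^sub>i = (-1)^i\<close> on \<open>1..2n\<close>: the
  cyclically adjacent pairs \<open>(i, i+1)\<close> and \<open>(1, 2n)\<close> have weight \<open>-1\<close> and make up the
  left-hand side, every other pair has weight \<open>(-1)^(j-i)\<close> and makes up the right-hand side.
  Hence the left-hand side exceeds the right-hand side by \<open>|\<Sum>\<^sub>i (-1)^i A\<^sub>i|\<^sup>2 = n\<^sup>2 |G\<^sub>1G\<^sub>2|\<^sup>2\<close>.\<close>

lemma sum_atLeastAtMost_double_pairs:
  fixes g :: "nat \<Rightarrow> 'a::comm_monoid_add"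
  shows "(\<Sum>i = 1..2*n. g i) = (\<Sum>k = 1..n. g (2*k - 1) + g (2*k))"
proof (induction n)
  case 0
  then show ?case by simp
next
  case (Suc n)
  have "{1..2 * Suc n} = insert (2*n + 2) (insert (2*n + 1) {1..2*n})" by auto
  then show ?case using Suc by (simp add: add_ac)
qed

lemma sum_cyclic_successor:
  fixes g :: "nat \<Rightarrow> nat \<Rightarrow> 'a::comm_monoid_add"
  assumes "N \<ge> 1"
  shows "(\<Sum>i = 1..N. g i (if i = N then 1 else i + 1)) = (\<Sum>i = 1..<N. g i (i + 1)) + g N 1"
proof -
  have "{1..N} = insert N {1..<N}" using assms by auto
  then have "(\<Sum>i = 1..N. g i (if i = N then 1 else i + 1))
      = g N 1 + (\<Sum>i = 1..<N. g i (if i = N then 1 else i + 1))"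
    by simp
  also have "(\<Sum>i = 1..<N. g i (if i = N then 1 else i + 1)) = (\<Sum>i = 1..<N. g i (i + 1))"
    by (rule sum.cong) auto
  finally show ?thesis by (simp add: add.commute)
qed

lemma sum_sum_symmetric_eq_twice_ordered_pairs:
  fixes f :: "'a::linorder \<Rightarrow> 'a \<Rightarrow> 'b::comm_semiring_1"
  assumes "finite I" and sym: "\<And>i j. f i j = f j i" and diag: "\<And>i. f i i = 0"
  shows "(\<Sum>i\<in>I. \<Sum>j\<in>I. f i j) = 2 * (\<Sum>(i, j) \<in> {(i, j) \<in> I \<times> I. i < j}. f i j)"
proof -
  let ?P = "{(i, j) \<in> I \<times> I. i < j}"
  let ?R = "{(i, j) \<in> I \<times> I. j < i}"
  let ?D = "{(i, j) \<in> I \<times> I. i = j}"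
  have fin: "finite ?P" "finite ?R" "finite ?D"
    using assms(1) by (auto intro: finite_subset[of _ "I \<times> I"])
  have "(\<Sum>i\<in>I. \<Sum>j\<in>I. f i j) = (\<Sum>(i, j) \<in> I \<times> I. f i j)"
    by (simp add: sum.cartesian_product)
  also have "\<dots> = (\<Sum>(i, j) \<in> ?P \<union> ?R \<union> ?D. f i j)"
    by (rule sum.cong) auto
  also have "\<dots> = (\<Sum>(i, j) \<in> ?P. f i j) + (\<Sum>(i, j) \<in> ?R. f i j) + (\<Sum>(i, j) \<in> ?D. f i j)"
    using fin by (subst sum.union_disjoint; auto)+
  also have "(\<Sum>(i, j) \<in> ?D. f i j) = 0"
    by (rule sum.neutral) (auto simp: diag)
  also have "(\<Sum>(i, j) \<in> ?R. f i j) = (\<Sum>(i, j) \<in> ?P. f i j)"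
  proof -
    have "?R = prod.swap ` ?P" by auto
    then show ?thesis
      by (simp add: sum.reindex case_prod_unfold sym)
  qed
  finally show ?thesis by (simp add: mult_2)
qed

lemma sum_sum_weighted_dist_sq:
  fixes A :: "'i \<Rightarrow> 'a::real_inner" and w :: "'i \<Rightarrow> real"
  assumes "(\<Sum>i\<in>I. w i) = 0"
  shows "(\<Sum>i\<in>I. \<Sum>j\<in>I. w i * w j * (dist (A i) (A j))\<^sup>2) = - 2 * (norm (\<Sum>i\<in>I. w i *\<^sub>R A i))\<^sup>2"
proof -
  have dist_sq: "(dist (A i) (A j))\<^sup>2 = A i \<bullet> A i - 2 * (A i \<bullet> A j) + A j \<bullet> A j" for i j
    by (simp add: dist_norm power2_norm_eq_inner inner_diff_left inner_diff_right inner_commute)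
  have "(\<Sum>i\<in>I. \<Sum>j\<in>I. w i * w j * (dist (A i) (A j))\<^sup>2)
      = (\<Sum>i\<in>I. w i * (A i \<bullet> A i)) * (\<Sum>j\<in>I. w j)
        - 2 * (\<Sum>i\<in>I. \<Sum>j\<in>I. w i * w j * (A i \<bullet> A j))
        + (\<Sum>i\<in>I. w i) * (\<Sum>j\<in>I. w j * (A j \<bullet> A j))"
    unfolding dist_sq sum_product
    by (simp add: sum_subtractf sum.distrib sum_distrib_left algebra_simps)
  also have "(\<Sum>i\<in>I. \<Sum>j\<in>I. w i * w j * (A i \<bullet> A j)) = (norm (\<Sum>i\<in>I. w i *\<^sub>R A i))\<^sup>2"
    by (simp add: power2_norm_eq_inner inner_sum_left inner_sum_right sum_distrib_left mult_ac
        inner_commute)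
  finally show ?thesis using assms by simp
qed

lemma sum_ordered_pairs_weighted_dist_sq:
  fixes A :: "'i::linorder \<Rightarrow> 'a::real_inner" and w :: "'i \<Rightarrow> real"
  assumes "finite I" and "(\<Sum>i\<in>I. w i) = 0"
  shows "(\<Sum>(i, j) \<in> {(i, j) \<in> I \<times> I. i < j}. w i * w j * (dist (A i) (A j))\<^sup>2)
           = - (norm (\<Sum>i\<in>I. w i *\<^sub>R A i))\<^sup>2"
  using sum_sum_symmetric_eq_twice_ordered_pairs[OF assms(1), of "\<lambda>i j. w i * w j * (dist (A i) (A j))\<^sup>2"]
    sum_sum_weighted_dist_sq[OF assms(2), of A]
  by (simp add: dist_commute mult.commute)

lemma sum_ordered_pairs_split_cycle:
  fixes f :: "nat \<Rightarrow> nat \<Rightarrow> 'a::comm_monoid_add"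
  assumes "N \<ge> 3"
  shows "(\<Sum>(i, j) \<in> {(i, j) \<in> {1..N} \<times> {1..N}. i < j}. f i j)
           = (\<Sum>(i, j) \<in> {(i, j). 1 \<le> i \<and> i < j \<and> j \<le> N \<and> 1 < j - i \<and> j - i < N - 1}. f i j)
             + ((\<Sum>i = 1..<N. f i (i + 1)) + f 1 N)"
proof -
  let ?Q = "{(i, j). 1 \<le> i \<and> i < j \<and> j \<le> N \<and> 1 < j - i \<and> j - i < N - 1}"
  let ?E = "insert (1, N) ((\<lambda>i. (i, i + 1)) ` {1..<N})"
  have pairs: "{(i, j) \<in> {1..N} \<times> {1..N}. i < j} = ?Q \<union> ?E"
    using assms by auto
  have "finite ?Q"
    by (rule finite_subset[of _ "{1..N} \<times> {1..N}"]) auto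
  then have "(\<Sum>(i, j) \<in> {(i, j) \<in> {1..N} \<times> {1..N}. i < j}. f i j)
      = (\<Sum>(i, j) \<in> ?Q. f i j) + (\<Sum>(i, j) \<in> ?E. f i j)"
    unfolding pairs by (rule sum.union_disjoint) auto
  moreover have "(1, N) \<notin> (\<lambda>i. (i, i + 1)) ` {1..<N}" and "inj_on (\<lambda>i. (i, i + 1)) {1..<N}"
    using assms by (auto simp: inj_on_def)
  ultimately show ?thesis by (simp add: sum.reindex add.commute)
qed

lemma neg_one_power_mult_eq_power_diff:
  assumes "i \<le> j"
  shows "(-1) ^ i * (-1) ^ j = ((-1) ^ (j - i) :: 'a::ring_1)"
proof -
  have "(-1) ^ j = (-1) ^ i * ((-1) ^ (j - i) :: 'a)"
    using assms by (metis le_add_diff_inverse power_add)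
  moreover have "(-1) ^ i * (-1) ^ i = (1 :: 'a)"
    by (simp flip: power_add)
  ultimately show ?thesis by (simp flip: mult.assoc)
qed

lemma sum_neg_one_power_double:
  "(\<Sum>i = 1..2*n. (-1) ^ i :: 'a::ring_1) = 0"
  unfolding sum_atLeastAtMost_double_pairs by (rule sum.neutral) (auto simp: power_diff)

lemma sum_alternating_double:
  fixes A :: "nat \<Rightarrow> 'a::real_vector"
  shows "(\<Sum>i = 1..2*n. (-1) ^ i *\<^sub>R A i) = (\<Sum>k = 1..n. A (2*k)) - (\<Sum>k = 1..n. A (2*k - 1))"
  unfolding sum_atLeastAtMost_double_pairs sum_subtractf[symmetric]
  by (rule sum.cong) (auto simp: power_diff)

lemma cycle_sum_eq_chord_sum_plus_norm_sq:
  fixes A :: "nat \<Rightarrow> 'a::real_inner"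
  assumes "n \<ge> 2"
  shows "(\<Sum>i = 1..2*n. (dist (A i) (A (if i = 2*n then 1 else i + 1)))\<^sup>2)
           = (\<Sum>(i, j) \<in> {(i, j). 1 \<le> i \<and> i < j \<and> j \<le> 2*n \<and> 1 < j - i \<and> j - i < 2*n - 1}.
                 (-1) ^ (j - i) * (dist (A i) (A j))\<^sup>2)
             + (norm ((\<Sum>k = 1..n. A (2*k)) - (\<Sum>k = 1..n. A (2*k - 1))))\<^sup>2"
    (is "?cycle = ?chords + (norm ?D)\<^sup>2")
proof -
  define e :: "nat \<Rightarrow> real" where "e i = (-1) ^ i" for i
  define d where "d i j = (dist (A i) (A j))\<^sup>2" for i j
  have cycle_split: "?cycle = (\<Sum>i = 1..<2*n. d i (i + 1)) + d (2*n) 1"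
    unfolding d_def using assms by (intro sum_cyclic_successor) simp
  have "(\<Sum>i = 1..2*n. e i) = 0"
    unfolding e_def by (rule sum_neg_one_power_double)
  moreover have "(\<Sum>i = 1..2*n. e i *\<^sub>R A i) = ?D"
    unfolding e_def by (rule sum_alternating_double)
  ultimately have "- (norm ?D)\<^sup>2
      = (\<Sum>(i, j) \<in> {(i, j) \<in> {1..2*n} \<times> {1..2*n}. i < j}. e i * e j * d i j)"
    using sum_ordered_pairs_weighted_dist_sq[of "{1..2*n}" e A] unfolding d_def by simp
  also have "\<dots> = (\<Sum>(i, j) \<in> {(i, j). 1 \<le> i \<and> i < j \<and> j \<le> 2*n \<and> 1 < j - i \<and> j - i < 2*n - 1}.
                    e i * e j * d i j)
                + ((\<Sum>i = 1..<2*n. e i * e (i + 1) * d i (i + 1)) + e 1 * e (2*n) * d 1 (2*n))"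
    using assms by (intro sum_ordered_pairs_split_cycle) simp
  also have "(\<Sum>(i, j) \<in> {(i, j). 1 \<le> i \<and> i < j \<and> j \<le> 2*n \<and> 1 < j - i \<and> j - i < 2*n - 1}.
                e i * e j * d i j) = ?chords"
    by (rule sum.cong) (auto simp: e_def d_def neg_one_power_mult_eq_power_diff)
  also have "(\<Sum>i = 1..<2*n. e i * e (i + 1) * d i (i + 1)) + e 1 * e (2*n) * d 1 (2*n) = - ?cycle"
    using cycle_split by (simp add: e_def d_def dist_commute sum_negf)
  finally show ?thesis by simp
qed

theorem corollary3p2:
  fixes A :: "nat \<Rightarrow> real ^ 'm" and n :: nat
  assumes "n \<ge> 2"
  shows "(\<Sum>i = 1..2*n. (dist (A i) (A (if i = 2*n then 1 else i + 1)))\<^sup>2)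
           = (\<Sum>(i, j) \<in> {(i, j). 1 \<le> i \<and> i < j \<and> j \<le> 2*n \<and> 1 < j - i \<and> j - i < 2*n - 1}.
                 (-1) ^ (j - i) * (dist (A i) (A j))\<^sup>2)
         \<longleftrightarrow> (1 / real n) *\<^sub>R (\<Sum>k = 1..n. A (2*k - 1))
              = (1 / real n) *\<^sub>R (\<Sum>k = 1..n. A (2*k))"
    (is "?cycle = ?chords \<longleftrightarrow> _")
proof -
  let ?D = "(\<Sum>k = 1..n. A (2*k)) - (\<Sum>k = 1..n. A (2*k - 1))"
  have "?cycle = ?chords \<longleftrightarrow> (norm ?D)\<^sup>2 = 0"
    unfolding cycle_sum_eq_chord_sum_plus_norm_sq[OF assms] by (simp only: add_cancel_left_right)
  also have "\<dots> \<longleftrightarrow> (\<Sum>k = 1..n. A (2*k - 1)) = (\<Sum>k = 1..n. A (2*k))"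
    by auto
  also have "\<dots> \<longleftrightarrow> (1 / real n) *\<^sub>R (\<Sum>k = 1..n. A (2*k - 1)) = (1 / real n) *\<^sub>R (\<Sum>k = 1..n. A (2*k))"
    using assms by simp
  finally show ?thesis .
qed

end
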